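(* Let $M$ be a matroid, let $S,T$ be disjoint subsets of $E(M)$, let $k:=\kappa_M(S,T)$, and let $e\in E(M)-(S\cup T)$ be such that $\kappa_{M/e}(S,T)\neq k$. If $(A,B)$ is a partition of $E(M)$ with $S\subseteq A$, $T\subseteq B$, $\lambda_M(A)=k$, $e\in A$, and $|A|$ minimum among all such partitions, then $e\in\mathrm{cl}_M(A-e)\cap\mathrm{cl}_M(B)$.
   Context: For a matroid $M$ with ground set $E$, $\lambda_M(X):=r_M(X)+r_M(E-X)-r(M)$, and for disjoint $S,T\subseteq E$, $\kappa_M(S,T):=\min\{\lambda_M(X):S\subseteq X\subseteq E-T\}$. $\mathrm{cl}_M$ denotes closure. *)

theory Defs
  imports Main
begin

definition matroid :: "'a set \<Rightarrow> ('a set \<Rightarrow> bool) \<Rightarrow> bool" where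
  "matroid E indep \<longleftrightarrow>
     finite E \<and> (\<forall>I. indep I \<longrightarrow> I \<subseteq> E) \<and> indep {} \<and>
     (\<forall>I J. indep J \<and> I \<subseteq> J \<longrightarrow> indep I) \<and>
     (\<forall>I J. indep I \<and> indep J \<and> card I < card J \<longrightarrow> (\<exists>x\<in>J - I. indep (insert x I)))"

definition rk :: "('a set \<Rightarrow> bool) \<Rightarrow> 'a set \<Rightarrow> nat" where
  "rk indep X = Max {card I | I. I \<subseteq> X \<and> indep I}"

definition lam :: "'a set \<Rightarrow> ('a set \<Rightarrow> bool) \<Rightarrow> 'a set \<Rightarrow> nat" where
  "lam E indep X = rk indep X + rk indep (E - X) - rk indep E"

definition kappa :: "'a set \<Rightarrow> ('a set \<Rightarrow> bool) \<Rightarrow> 'a set \<Rightarrow> 'a set \<Rightarrow> nat" where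
  "kappa E indep S T = Min {lam E indep X | X. S \<subseteq> X \<and> X \<subseteq> E - T}"

definition cl :: "'a set \<Rightarrow> ('a set \<Rightarrow> bool) \<Rightarrow> 'a set \<Rightarrow> 'a set" where
  "cl E indep X = {x \<in> E. rk indep (insert x X) = rk indep X}"

text \<open>Independent sets of the contraction M/e (ground set E - {e}):
  if e is not a loop, I is independent iff I \<union> {e} is independent in M;
  if e is a loop, M/e = M\e.\<close>
definition contract :: "('a set \<Rightarrow> bool) \<Rightarrow> 'a \<Rightarrow> 'a set \<Rightarrow> bool" where
  "contract indep e I \<longleftrightarrow> e \<notin> I \<and> (if indep {e} then indep (insert e I) else indep I)"

end

theory Submission
  imports Defs
begin

text \<open>
  Contracting e can only lower connectivity, so \<open>\<kappa>\<^bsub>M/e\<^esub>(S,T) < k\<close>. Take a set X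
  attaining \<open>\<kappa>\<^bsub>M/e\<^esub>(S,T)\<close> and let \<open>X' = X \<union> {e}\<close>. Since \<open>\<lambda>\<^sub>M(X') \<le> \<lambda>\<^bsub>M/e\<^esub>(X) + 1 \<le> k\<close>,
  the set X' attains k, and the strict drop forces \<open>e \<in> cl\<^sub>M(E - X')\<close>. By submodularity
  of \<open>\<lambda>\<^sub>M\<close>, \<open>A \<inter> X'\<close> attains k as well, so minimality of A gives \<open>A \<subseteq> X'\<close>, i.e.
  \<open>E - X' \<subseteq> B\<close>, whence \<open>e \<in> cl\<^sub>M(B)\<close>. Finally \<open>\<lambda>\<^sub>M(A - e) \<ge> k = \<lambda>\<^sub>M(A)\<close> together with
  \<open>e \<in> cl\<^sub>M(B)\<close> forces \<open>r(A - e) = r(A)\<close>.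
\<close>

lemma rk_eqI:
  assumes "\<And>I. I \<subseteq> X \<Longrightarrow> indep I \<Longrightarrow> card I \<le> n"
    and "I \<subseteq> X" "indep I" "card I = n"
  shows "rk indep X = n"
proof -
  have "finite {card I |I. I \<subseteq> X \<and> indep I}"
    by (rule finite_subset[of _ "{..n}"]) (use assms(1) in auto)
  then show ?thesis
    unfolding rk_def by (rule Max_eqI) (use assms in auto)
qed

lemma finite_lam_values: "finite E \<Longrightarrow> finite {lam E indep X |X. S \<subseteq> X \<and> X \<subseteq> E - T}"
  by (rule finite_subset[of _ "lam E indep ` Pow E"]) auto

lemma kappa_le_lam:
  assumes "finite E" "S \<subseteq> X" "X \<subseteq> E - T"
  shows "kappa E indep S T \<le> lam E indep X"
  unfolding kappa_def by (rule Min_le[OF finite_lam_values]) (use assms in auto)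

lemma kappa_attained:
  assumes "finite E" "S \<subseteq> E - T"
  obtains X where "S \<subseteq> X" "X \<subseteq> E - T" "lam E indep X = kappa E indep S T"
proof -
  let ?L = "{lam E indep X |X. S \<subseteq> X \<and> X \<subseteq> E - T}"
  have "lam E indep S \<in> ?L" using assms(2) by blast
  then have "Min ?L \<in> ?L" by (intro Min_in finite_lam_values assms(1)) blast
  then obtain X where X: "Min ?L = lam E indep X" "S \<subseteq> X" "X \<subseteq> E - T" by blast
  show ?thesis by (rule that[OF X(2,3)]) (simp add: kappa_def X(1))
qed

locale finite_matroid =
  fixes E :: "'a set" and indep :: "'a set \<Rightarrow> bool"
  assumes matroid: "matroid E indep"
begin

lemma finite_ground: "finite E"
  and indep_subset_ground: "indep I \<Longrightarrow> I \<subseteq> E"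
  and indep_empty: "indep {}"
  and indep_subset: "indep J \<Longrightarrow> I \<subseteq> J \<Longrightarrow> indep I"
  and indep_exchange: "indep I \<Longrightarrow> indep J \<Longrightarrow> card I < card J \<Longrightarrow> \<exists>x\<in>J - I. indep (insert x I)"
  using matroid unfolding matroid_def by blast+

lemma finite_indep: "indep I \<Longrightarrow> finite I"
  using indep_subset_ground finite_ground finite_subset by blast

lemma finite_indep_cards: "finite {card I |I. I \<subseteq> X \<and> indep I}"
  by (rule finite_subset[of _ "{..card E}"])
    (auto intro: card_mono finite_ground dest: indep_subset_ground)

lemma card_le_rk: "I \<subseteq> X \<Longrightarrow> indep I \<Longrightarrow> card I \<le> rk indep X"
  unfolding rk_def by (rule Max_ge[OF finite_indep_cards]) auto

lemma rk_witness: obtains I where "I \<subseteq> X" "indep I" "card I = rk indep X"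
proof -
  have "{card I |I. I \<subseteq> X \<and> indep I} \<noteq> {}" using indep_empty by auto
  from Max_in[OF finite_indep_cards this] show ?thesis
    using that unfolding rk_def by auto
qed

lemma indep_extend_to_rk:
  assumes "indep I" "I \<subseteq> X"
  shows "\<exists>J. I \<subseteq> J \<and> J \<subseteq> X \<and> indep J \<and> card J = rk indep X"
  using assms
proof (induction "rk indep X - card I" arbitrary: I rule: less_induct)
  case less
  show ?case
  proof (cases "card I = rk indep X")
    case True
    with less.prems show ?thesis by blast
  next
    case False
    obtain K where K: "K \<subseteq> X" "indep K" "card K = rk indep X" by (rule rk_witness)
    have "card I < card K" using card_le_rk[OF less.prems(2,1)] False K(3) by simp
    then obtain x where x: "x \<in> K - I" "indep (insert x I)"
      using indep_exchange less.prems(1) K(2) by blast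
    have "insert x I \<subseteq> X" using x(1) K(1) less.prems(2) by blast
    moreover have "card (insert x I) = Suc (card I)" using x(1) finite_indep[OF less.prems(1)] by simp
    moreover have "card (insert x I) \<le> rk indep X"
      using card_le_rk[OF calculation(1) x(2)] .
    ultimately have "\<exists>J. insert x I \<subseteq> J \<and> J \<subseteq> X \<and> indep J \<and> card J = rk indep X"
      using less.hyps[of "insert x I"] x(2) by simp
    then show ?thesis by blast
  qed
qed

lemma rk_mono:
  assumes "X \<subseteq> Y"
  shows "rk indep X \<le> rk indep Y"
proof -
  obtain I where I: "I \<subseteq> X" "indep I" "card I = rk indep X" by (rule rk_witness)
  have "card I \<le> rk indep Y" using I(1,2) assms by (intro card_le_rk) auto
  with I(3) show ?thesis by simp
qed

lemma rk_submod: "rk indep (X \<union> Y) + rk indep (X \<inter> Y) \<le> rk indep X + rk indep Y"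
proof -
  obtain I where I: "I \<subseteq> X \<inter> Y" "indep I" "card I = rk indep (X \<inter> Y)" by (rule rk_witness)
  have "I \<subseteq> X \<union> Y" using I(1) by blast
  then obtain J where J: "I \<subseteq> J" "J \<subseteq> X \<union> Y" "indep J" "card J = rk indep (X \<union> Y)"
    using indep_extend_to_rk[OF I(2)] by metis
  have fin: "finite J" using finite_indep[OF J(3)] .
  have "(J \<inter> X) \<union> (J \<inter> Y) = J" "(J \<inter> X) \<inter> (J \<inter> Y) = J \<inter> X \<inter> Y" using J(2) by blast+
  then have "card J + card (J \<inter> X \<inter> Y) = card (J \<inter> X) + card (J \<inter> Y)"
    using card_Un_Int[of "J \<inter> X" "J \<inter> Y"] fin by simp
  moreover have "card I \<le> card (J \<inter> X \<inter> Y)"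
    using I(1) J(1) fin by (intro card_mono) auto
  moreover have "card (J \<inter> X) \<le> rk indep X"
    using indep_subset[OF J(3), of "J \<inter> X"] by (intro card_le_rk) auto
  moreover have "card (J \<inter> Y) \<le> rk indep Y"
    using indep_subset[OF J(3), of "J \<inter> Y"] by (intro card_le_rk) auto
  ultimately show ?thesis using I(3) J(4) by linarith
qed

lemma rk_singleton_le: "rk indep {x} \<le> 1"
proof -
  obtain I where "I \<subseteq> {x}" "card I = rk indep {x}" by (rule rk_witness)
  then show ?thesis using card_mono[of "{x}" I] by simp
qed

lemma rk_insert_le: "rk indep (insert x X) \<le> rk indep X + rk indep {x}"
  using rk_submod[of X "{x}"] by simp

lemma lam_add_rk: "Z \<subseteq> E \<Longrightarrow> lam E indep Z + rk indep E = rk indep Z + rk indep (E - Z)"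
  using rk_submod[of Z "E - Z"] unfolding lam_def by (simp add: Un_absorb1)

lemma lam_submod:
  assumes "X \<subseteq> E" "Y \<subseteq> E"
  shows "lam E indep (X \<inter> Y) + lam E indep (X \<union> Y) \<le> lam E indep X + lam E indep Y"
proof -
  have "(E - X) \<union> (E - Y) = E - (X \<inter> Y)" "(E - X) \<inter> (E - Y) = E - (X \<union> Y)" by blast+
  then have "rk indep (E - (X \<inter> Y)) + rk indep (E - (X \<union> Y)) \<le> rk indep (E - X) + rk indep (E - Y)"
    using rk_submod[of "E - X" "E - Y"] by simp
  moreover have "X \<inter> Y \<subseteq> E" "X \<union> Y \<subseteq> E" using assms by blast+
  ultimately show ?thesis
    using rk_submod[of X Y] lam_add_rk[OF assms(1)] lam_add_rk[OF assms(2)]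
      lam_add_rk[of "X \<inter> Y"] lam_add_rk[of "X \<union> Y"]
    by linarith
qed

lemma cl_mono: "X \<subseteq> Y \<Longrightarrow> cl E indep X \<subseteq> cl E indep Y"
proof
  fix x assume XY: "X \<subseteq> Y" and "x \<in> cl E indep X"
  then have x: "x \<in> E" "rk indep (insert x X) = rk indep X" unfolding cl_def by auto
  have "Y \<union> insert x X = insert x Y" "X \<subseteq> Y \<inter> insert x X" using XY by blast+
  then have "rk indep (insert x Y) \<le> rk indep Y"
    using rk_submod[of Y "insert x X"] rk_mono[of X "Y \<inter> insert x X"] x(2) by simp
  then have "rk indep (insert x Y) = rk indep Y" using rk_mono[OF subset_insertI, of Y x] by simp
  then show "x \<in> cl E indep Y" using x(1) unfolding cl_def by simp
qed

lemma rk_contract_add: "rk (contract indep e) X + rk indep {e} = rk indep (insert e X)"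
proof (cases "indep {e}")
  case True
  have "rk (contract indep e) X = rk indep (insert e X) - 1"
  proof -
    have "card I \<le> rk indep (insert e X) - 1" if "I \<subseteq> X" "contract indep e I" for I
    proof -
      have "e \<notin> I" "indep (insert e I)" using that(2) True unfolding contract_def by simp_all
      then show ?thesis
        using card_le_rk[of "insert e I" "insert e X"] that(1) finite_indep by force
    qed
    moreover have "{e} \<subseteq> insert e X" by simp
    then obtain J where J: "{e} \<subseteq> J" "J \<subseteq> insert e X" "indep J" "card J = rk indep (insert e X)"
      using indep_extend_to_rk[OF True] by metis
    moreover have "contract indep e (J - {e})"
      using J(1,3) True unfolding contract_def by (simp add: insert_absorb)
    ultimately show ?thesis
      by (intro rk_eqI[where I = "J - {e}"]) (use J(1,2) finite_indep[OF J(3)] in auto)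
  qed
  moreover have "rk indep {e} = 1" using True rk_singleton_le[of e] card_le_rk[of "{e}" "{e}"] by simp
  moreover have "rk indep {e} \<le> rk indep (insert e X)" by (rule rk_mono) simp
  ultimately show ?thesis by simp
next
  case False
  have "contract indep e = indep"
    using False indep_subset[of _ "{e}"] unfolding contract_def by fastforce
  moreover have "rk indep {e} = 0"
    using False indep_empty by (intro rk_eqI[where I = "{}"]) (auto simp: subset_singleton_iff)
  moreover have "rk indep (insert e X) = rk indep X"
    using rk_insert_le[of e X] rk_mono[OF subset_insertI, of X e] calculation(2) by simp
  ultimately show ?thesis by simp
qed

lemma lam_contract_add:
  assumes "X \<subseteq> E - {e}" "e \<in> E"
  shows "lam (E - {e}) (contract indep e) X + rk indep E + rk indep {e}
         = rk indep (insert e X) + rk indep (insert e (E - {e} - X))"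
proof -
  let ?Y = "E - {e} - X" and ?r = "rk (contract indep e)"
  have U: "insert e X \<union> insert e ?Y = E" and I: "insert e X \<inter> insert e ?Y = {e}"
    using assms by blast+
  have submod: "rk indep E + rk indep {e} \<le> rk indep (insert e X) + rk indep (insert e ?Y)"
    using rk_submod[of "insert e X" "insert e ?Y"] unfolding U I .
  have "insert e (E - {e}) = E" using assms(2) by blast
  then have rE: "?r (E - {e}) + rk indep {e} = rk indep E"
    using rk_contract_add[of e "E - {e}"] by simp
  have rX: "?r X + rk indep {e} = rk indep (insert e X)" and rY: "?r ?Y + rk indep {e} = rk indep (insert e ?Y)"
    by (rule rk_contract_add)+
  have "?r (E - {e}) \<le> ?r X + ?r ?Y" using submod rE rX rY by linarith
  then have "lam (E - {e}) (contract indep e) X + ?r (E - {e}) = ?r X + ?r ?Y"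
    unfolding lam_def by simp
  then show ?thesis using rE rX rY by linarith
qed

lemma lam_insert_contract_add:
  assumes "X \<subseteq> E - {e}" "e \<in> E"
  shows "lam E indep (insert e X) + rk indep (insert e (E - insert e X))
         = lam (E - {e}) (contract indep e) X + rk indep {e} + rk indep (E - insert e X)"
proof -
  have "E - {e} - X = E - insert e X" "insert e X \<subseteq> E" using assms by blast+
  then show ?thesis
    using lam_contract_add[OF assms] lam_add_rk[of "insert e X"] by simp
qed

lemma lam_insert_le_contract:
  assumes "X \<subseteq> E - {e}" "e \<in> E"
  shows "lam E indep (insert e X) \<le> lam (E - {e}) (contract indep e) X + 1"
  using lam_insert_contract_add[OF assms] rk_singleton_le[of e]
    rk_mono[OF subset_insertI, of "E - insert e X" e]
  by linarith

lemma mem_cl_of_lam_contract_less: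
  assumes "X \<subseteq> E - {e}" "e \<in> E"
    and "lam (E - {e}) (contract indep e) X < lam E indep (insert e X)"
  shows "e \<in> cl E indep (E - insert e X)"
proof -
  have "rk indep (insert e (E - insert e X)) \<le> rk indep (E - insert e X)"
    using lam_insert_contract_add[OF assms(1,2)] assms(3) rk_singleton_le[of e] by linarith
  then show ?thesis
    using rk_mono[OF subset_insertI, of "E - insert e X" e] assms(2) unfolding cl_def by simp
qed

lemma lam_contract_diff_le:
  assumes "e \<in> X" "X \<subseteq> E"
  shows "lam (E - {e}) (contract indep e) (X - {e}) \<le> lam E indep X"
proof -
  have "insert e (X - {e}) = X" "insert e (E - {e} - (X - {e})) = insert e (E - X)"
    using assms by blast+
  then have "lam (E - {e}) (contract indep e) (X - {e}) + rk indep E + rk indep {e}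
      = rk indep X + rk indep (insert e (E - X))"
    using lam_contract_add[of "X - {e}" e] assms by auto
  then show ?thesis
    using lam_add_rk[OF assms(2)] rk_insert_le[of e "E - X"] by linarith
qed

lemma mem_cl_diff_of_lam_le:
  assumes "e \<in> A" "A \<subseteq> E" "e \<in> cl E indep (E - A)"
    and "lam E indep A \<le> lam E indep (A - {e})"
  shows "e \<in> cl E indep (A - {e})"
proof -
  have "E - (A - {e}) = insert e (E - A)" "insert e (A - {e}) = A" using assms(1,2) by blast+
  moreover have "rk indep (insert e (E - A)) = rk indep (E - A)" using assms(3) unfolding cl_def by simp
  ultimately have "lam E indep (A - {e}) + rk indep E = rk indep (A - {e}) + rk indep (E - A)"
    using lam_add_rk[of "A - {e}"] assms(2) by auto
  then have "rk indep A \<le> rk indep (A - {e})"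
    using lam_add_rk[OF assms(2)] assms(4) by linarith
  then show ?thesis
    using rk_mono[of "A - {e}" A] assms(1,2) \<open>insert e (A - {e}) = A\<close> unfolding cl_def by auto
qed

lemma kappa_minimizer_Int:
  assumes "S \<subseteq> X" "X \<subseteq> E - T" "lam E indep X = kappa E indep S T"
    and "S \<subseteq> Y" "Y \<subseteq> E - T" "lam E indep Y = kappa E indep S T"
  shows "lam E indep (X \<inter> Y) = kappa E indep S T"
proof -
  have "lam E indep (X \<inter> Y) + lam E indep (X \<union> Y) \<le> lam E indep X + lam E indep Y"
    using assms(2,5) by (intro lam_submod) auto
  moreover have "kappa E indep S T \<le> lam E indep (X \<inter> Y)"
    using assms by (intro kappa_le_lam finite_ground) auto
  moreover have "kappa E indep S T \<le> lam E indep (X \<union> Y)"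
    using assms by (intro kappa_le_lam finite_ground) auto
  ultimately show ?thesis using assms(3,6) by linarith
qed

end

theorem lemma3p5:
  fixes E :: "'a set" and indep :: "'a set \<Rightarrow> bool"
    and S T A B :: "'a set" and e :: 'a
  assumes M: "matroid E indep"
    and ST: "S \<subseteq> E" "T \<subseteq> E" "S \<inter> T = {}"
    and e: "e \<in> E - (S \<union> T)"
    and ne: "kappa (E - {e}) (contract indep e) S T \<noteq> kappa E indep S T"
    and part: "A \<union> B = E" "A \<inter> B = {}"
    and SA: "S \<subseteq> A" and TB: "T \<subseteq> B"
    and lamA: "lam E indep A = kappa E indep S T"
    and eA: "e \<in> A"
    and minA: "\<And>A' B'. A' \<union> B' = E \<Longrightarrow> A' \<inter> B' = {} \<Longrightarrow> S \<subseteq> A' \<Longrightarrow> T \<subseteq> B' \<Longrightarrow>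
                  lam E indep A' = kappa E indep S T \<Longrightarrow> e \<in> A' \<Longrightarrow> card A \<le> card A'"
  shows "e \<in> cl E indep (A - {e}) \<inter> cl E indep B"
proof -
  interpret finite_matroid E indep by (rule finite_matroid.intro[OF M])
  let ?k = "kappa E indep S T" and ?lamc = "lam (E - {e}) (contract indep e)"
  have AE: "A \<subseteq> E" and B: "B = E - A" and eE: "e \<in> E" using part e by auto
  have "kappa (E - {e}) (contract indep e) S T \<le> ?lamc (A - {e})"
    using SA TB part e finite_ground by (intro kappa_le_lam) auto
  also have "\<dots> \<le> ?k" using lam_contract_diff_le[OF eA AE] lamA by simp
  finally have contract_less: "kappa (E - {e}) (contract indep e) S T < ?k" using ne by simp
  have "finite (E - {e})" "S \<subseteq> E - {e} - T" using finite_ground ST e by auto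
  then obtain X where X: "S \<subseteq> X" "X \<subseteq> E - {e} - T" "?lamc X = kappa (E - {e}) (contract indep e) S T"
    by (rule kappa_attained)
  let ?X' = "insert e X"
  have X': "S \<subseteq> ?X'" "?X' \<subseteq> E - T" using X e by auto
  have "?k \<le> lam E indep ?X'" using X' finite_ground by (intro kappa_le_lam)
  moreover have "lam E indep ?X' \<le> ?lamc X + 1" using X(2) eE by (intro lam_insert_le_contract) auto
  ultimately have lamX': "lam E indep ?X' = ?k" and "?lamc X < lam E indep ?X'"
    using X(3) contract_less by linarith+
  have clX': "e \<in> cl E indep (E - ?X')"
    using X(2) eE \<open>?lamc X < lam E indep ?X'\<close> by (intro mem_cl_of_lam_contract_less) auto
  have "lam E indep (A \<inter> ?X') = ?k"
    using SA TB part X' lamA lamX' by (intro kappa_minimizer_Int) auto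
  then have "card A \<le> card (A \<inter> ?X')"
    using SA TB part X eA by (intro minA[of _ "E - (A \<inter> ?X')"]) auto
  then have "A \<subseteq> ?X'" using card_seteq[OF finite_subset[OF AE finite_ground], of "A \<inter> ?X'"] by auto
  then have clB: "e \<in> cl E indep B" using cl_mono[of "E - ?X'" B] clX' B by auto
  have "?k \<le> lam E indep (A - {e})"
    using SA TB part e finite_ground by (intro kappa_le_lam) auto
  with clB have "e \<in> cl E indep (A - {e})"
    using B lamA by (intro mem_cl_diff_of_lam_le[OF eA AE]) auto
  with clB show ?thesis by blast
qed

end
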